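(* Let $\alpha > 0$, $\beta > 0$, $\tau > 0$, and let $I$ be an interval which is a finite union of mesh intervals $[k\tau,(k+1)\tau]$, $k \in \mathbb{Z}$. Let $u$ be continuous on $I$ and affine on each mesh interval, and let $v$ be its upwinded interpolant. Then $$\int_I |\dot v |^2 = \Phi(p) \int_I |\dot u|^2,$$ where $p=\beta \tau / \alpha $ is the P\'eclet number and $$\Phi(p) = \left ( \frac{\exp(p) +1}{\exp(p) -1} \right ) \frac{p}{2}.$$
   Context: The upwinded interpolant of a continuous function $u$ is the unique continuous function $v$ with $v(k\tau) = u(k\tau)$ at every node $k\tau$ and which, on each mesh interval $[k\tau, (k+1)\tau]$, is of the form $v(t) = c_1 + c_2 \exp(-\beta t/\alpha)$ for constants $c_1, c_2$ (depending on the interval). A dot denotes the derivative. *)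

theory Defs
  imports "HOL-Analysis.Analysis"
begin

text \<open>The interval I = [a*tau, b*tau] (a < b integers) is the union of the mesh
intervals [k*tau, (k+1)*tau], a \<le> k < b.\<close>

definition mesh_interval :: "real \<Rightarrow> int \<Rightarrow> real set" where
  "mesh_interval \<tau> k = {real_of_int k * \<tau> .. real_of_int (k + 1) * \<tau>}"

definition piecewise_affine_on_mesh :: "real \<Rightarrow> int \<Rightarrow> int \<Rightarrow> (real \<Rightarrow> real) \<Rightarrow> bool" where
  "piecewise_affine_on_mesh \<tau> a b u \<longleftrightarrow>
     continuous_on {real_of_int a * \<tau> .. real_of_int b * \<tau>} u \<and>
     (\<forall>k. a \<le> k \<and> k < b \<longrightarrow>
        (\<exists>c d. \<forall>t\<in>mesh_interval \<tau> k. u t = c + d * t))"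

definition upwinded_interpolant ::
  "real \<Rightarrow> real \<Rightarrow> real \<Rightarrow> int \<Rightarrow> int \<Rightarrow> (real \<Rightarrow> real) \<Rightarrow> (real \<Rightarrow> real) \<Rightarrow> bool" where
  "upwinded_interpolant \<alpha> \<beta> \<tau> a b u v \<longleftrightarrow>
     continuous_on {real_of_int a * \<tau> .. real_of_int b * \<tau>} v \<and>
     (\<forall>k. a \<le> k \<and> k \<le> b \<longrightarrow> v (real_of_int k * \<tau>) = u (real_of_int k * \<tau>)) \<and>
     (\<forall>k. a \<le> k \<and> k < b \<longrightarrow>
        (\<exists>c1 c2. \<forall>t\<in>mesh_interval \<tau> k. v t = c1 + c2 * exp (- \<beta> * t / \<alpha>)))"

definition peclet_Phi :: "real \<Rightarrow> real" where
  "peclet_Phi p = ((exp p + 1) / (exp p - 1)) * (p / 2)"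

end

theory Submission
  imports Defs
begin

text \<open>On a mesh cell of length h let u have slope d and v = c1 + c2 exp(-r t), r = \<beta>/\<alpha>.
  Both energies are explicit: d^2 h and c2^2 (r/2) (A^2 - B^2), where A, B are the values of
  exp(-r t) at the end points. Interpolation at both end points gives c2 (B - A) = d h, and
  since B/A = exp(-p) with p = r h, the ratio of the energies is (p/2) (A + B)/(A - B) = \<Phi>(p),
  the same on every cell. Summing over the cells gives the theorem.\<close>

lemma deriv_eq_if_agree_on_open:
  assumes "open S" "t \<in> S" "\<forall>s\<in>S. f s = g s" "(g has_field_derivative D) (at t)"
  shows "deriv f t = D"
proof -
  have "(f has_field_derivative D) (at t)"
    using assms(4) by (rule has_field_derivative_transform_within_open) (use assms(1-3) in auto)
  then show ?thesis by (rule DERIV_imp_deriv)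
qed

lemma has_integral_deriv_affine_squared:
  fixes u :: "real \<Rightarrow> real"
  assumes "L \<le> R" and u: "\<forall>t\<in>{L..R}. u t = c + d * t"
  shows "((\<lambda>t. (deriv u t)\<^sup>2) has_integral d\<^sup>2 * (R - L)) {L..R}"
proof -
  have "deriv u t = d" if "t \<in> {L<..<R}" for t
    by (rule deriv_eq_if_agree_on_open[where S="{L<..<R}" and g="\<lambda>s. c + d * s"])
      (use that u in \<open>auto intro!: derivative_eq_intros\<close>)
  moreover have "((\<lambda>t. d\<^sup>2) has_integral d\<^sup>2 * (R - L)) {L..R}"
    using has_integral_const_real[of "d\<^sup>2" L R] \<open>L \<le> R\<close> by (simp add: mult.commute)
  ultimately show ?thesis
    by (rule_tac has_integral_spike_finite[where S="{L, R}", rotated 2]) auto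
qed

lemma has_integral_deriv_exp_squared:
  fixes v :: "real \<Rightarrow> real"
  assumes "L \<le> R" and v: "\<forall>t\<in>{L..R}. v t = c1 + c2 * exp (- r * t)"
  shows "((\<lambda>t. (deriv v t)\<^sup>2) has_integral
           c2\<^sup>2 * r / 2 * ((exp (- r * L))\<^sup>2 - (exp (- r * R))\<^sup>2)) {L..R}"
proof -
  define f where "f t = (c2 * exp (- r * t) * - r)\<^sup>2" for t
  define F where "F t = - c2\<^sup>2 * r / 2 * (exp (- r * t))\<^sup>2" for t
  have "deriv v t = c2 * exp (- r * t) * - r" if "t \<in> {L<..<R}" for t
    by (rule deriv_eq_if_agree_on_open[where S="{L<..<R}" and g="\<lambda>s. c1 + c2 * exp (- r * s)"])
      (use that v in \<open>auto intro!: derivative_eq_intros\<close>)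
  moreover have "(f has_integral F R - F L) {L..R}"
  proof (rule fundamental_theorem_of_calculus[OF \<open>L \<le> R\<close>])
    fix t
    have "(F has_real_derivative f t) (at t)"
      unfolding F_def f_def
      by (rule derivative_eq_intros refl | simp)+ (simp add: power2_eq_square field_simps)
    then show "(F has_vector_derivative f t) (at t within {L..R})"
      by (simp add: has_real_derivative_iff_has_vector_derivative[symmetric] has_field_derivative_at_within)
  qed
  moreover have "F R - F L = c2\<^sup>2 * r / 2 * ((exp (- r * L))\<^sup>2 - (exp (- r * R))\<^sup>2)"
    unfolding F_def by (simp add: algebra_simps)
  ultimately show ?thesis
    by (rule_tac has_integral_spike_finite[where S="{L, R}" and f=f, rotated 2]) (auto simp: f_def)
qed

lemma peclet_Phi_exp_minus:
  assumes "p \<noteq> 0"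
  shows "peclet_Phi p = (1 + exp (- p)) / (1 - exp (- p)) * p / 2"
proof -
  have "exp (- p) \<noteq> 1" "exp p \<noteq> 1" using assms by auto
  then show ?thesis
    unfolding peclet_Phi_def exp_minus by (simp add: field_simps)
qed

lemma upwinded_cell_energy:
  fixes u v :: "real \<Rightarrow> real"
  assumes "r \<noteq> 0" "h > 0"
    and u: "\<forall>t\<in>{L..L+h}. u t = c + d * t"
    and v: "\<forall>t\<in>{L..L+h}. v t = c1 + c2 * exp (- r * t)"
    and left: "v L = u L" and right: "v (L+h) = u (L+h)"
  shows "((\<lambda>t. (deriv v t)\<^sup>2) has_integral peclet_Phi (r * h) * (d\<^sup>2 * h)) {L..L+h}"
proof -
  define A where "A = exp (- r * L)"
  define q where "q = exp (- (r * h))"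
  have B: "exp (- r * (L+h)) = A * q"
    unfolding A_def q_def by (simp add: algebra_simps flip: exp_add)
  have "q \<noteq> 1" unfolding q_def using assms(1,2) by simp
  have slope: "c2 * A * (q - 1) = d * h"
  proof -
    have "v (L+h) - v L = c2 * A * (q - 1)"
      using v \<open>h > 0\<close> B unfolding A_def by (simp add: algebra_simps)
    moreover have "u (L+h) - u L = d * h"
      using u \<open>h > 0\<close> by (simp add: algebra_simps)
    ultimately show ?thesis using left right by simp
  qed
  have "c2\<^sup>2 * r / 2 * (A\<^sup>2 - (A * q)\<^sup>2) = (1 + q) / (1 - q) * r / 2 * (c2 * A * (q - 1))\<^sup>2"
    using \<open>q \<noteq> 1\<close> by (simp add: power2_eq_square field_simps)
  also have "\<dots> = (1 + q) / (1 - q) * (r * h) / 2 * (d\<^sup>2 * h)"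
    unfolding slope using \<open>h > 0\<close> by (simp add: power2_eq_square)
  also have "\<dots> = peclet_Phi (r * h) * (d\<^sup>2 * h)"
    unfolding q_def using assms(1,2) by (simp add: peclet_Phi_exp_minus)
  finally show ?thesis
    using has_integral_deriv_exp_squared[OF _ v, unfolded B A_def[symmetric]] \<open>h > 0\<close> by simp
qed

lemma mesh_interval_eq: "mesh_interval \<tau> k = {real_of_int k * \<tau> .. real_of_int k * \<tau> + \<tau>}"
  unfolding mesh_interval_def by (simp add: distrib_right)

lemma has_integral_mesh_sum:
  fixes f :: "real \<Rightarrow> 'a::banach"
  assumes "\<tau> \<ge> 0" "a \<le> b"
    and cells: "\<And>k. a \<le> k \<Longrightarrow> k < b \<Longrightarrow> (f has_integral I k) (mesh_interval \<tau> k)"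
  shows "(f has_integral (\<Sum>k\<in>{a..<b}. I k)) {real_of_int a * \<tau> .. real_of_int b * \<tau>}"
  using \<open>a \<le> b\<close> cells
proof (induction b rule: int_ge_induct)
  case base
  then show ?case by (simp add: has_integral_refl)
next
  case (step b)
  have "(f has_integral (\<Sum>k\<in>{a..<b}. I k) + I b) {real_of_int a * \<tau> .. real_of_int b * \<tau> + \<tau>}"
  proof (rule has_integral_combine)
    show "(f has_integral (\<Sum>k\<in>{a..<b}. I k)) {real_of_int a * \<tau> .. real_of_int b * \<tau>}"
      using step by simp
    show "(f has_integral I b) {real_of_int b * \<tau> .. real_of_int b * \<tau> + \<tau>}"
      using step.prems[of b] step.hyps by (simp add: mesh_interval_eq)
  qed (use step.hyps \<open>\<tau> \<ge> 0\<close> in \<open>auto intro: mult_right_mono\<close>)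
  moreover have "{a..<b + 1} = insert b {a..<b}" using step.hyps by auto
  ultimately show ?case by (simp add: distrib_right add.commute)
qed

theorem proposition10:
  fixes \<alpha> \<beta> \<tau> :: real and a b :: int and u v :: "real \<Rightarrow> real"
  assumes "\<alpha> > 0" and "\<beta> > 0" and "\<tau> > 0" and "a < b"
    and "piecewise_affine_on_mesh \<tau> a b u"
    and "upwinded_interpolant \<alpha> \<beta> \<tau> a b u v"
  shows "integral {real_of_int a * \<tau> .. real_of_int b * \<tau>} (\<lambda>t. (deriv v t)\<^sup>2)
         = peclet_Phi (\<beta> * \<tau> / \<alpha>)
           * integral {real_of_int a * \<tau> .. real_of_int b * \<tau>} (\<lambda>t. (deriv u t)\<^sup>2)"
proof -
  let ?\<Phi> = "peclet_Phi (\<beta> * \<tau> / \<alpha>)"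
  obtain c d where u: "\<And>k. a \<le> k \<Longrightarrow> k < b \<Longrightarrow> \<forall>t\<in>mesh_interval \<tau> k. u t = c k + d k * t"
    using assms(5) unfolding piecewise_affine_on_mesh_def by metis
  have v_cell: "((\<lambda>t. (deriv v t)\<^sup>2) has_integral ?\<Phi> * ((d k)\<^sup>2 * \<tau>)) (mesh_interval \<tau> k)"
    if "a \<le> k" "k < b" for k
  proof -
    have "\<exists>c1 c2. \<forall>t\<in>mesh_interval \<tau> k. v t = c1 + c2 * exp (- \<beta> * t / \<alpha>)"
      using assms(6) that unfolding upwinded_interpolant_def by simp
    then obtain c1 c2 where "\<forall>t\<in>mesh_interval \<tau> k. v t = c1 + c2 * exp (- \<beta> * t / \<alpha>)"
      by blast
    then have v: "\<forall>t\<in>mesh_interval \<tau> k. v t = c1 + c2 * exp (- (\<beta> / \<alpha>) * t)"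
      by simp
    have node: "v (real_of_int j * \<tau>) = u (real_of_int j * \<tau>)" if "a \<le> j" "j \<le> b" for j
      using assms(6) that unfolding upwinded_interpolant_def by blast
    show ?thesis
      using upwinded_cell_energy[where r="\<beta> / \<alpha>" and h=\<tau> and c="c k" and d="d k"]
        u[OF that] v assms(1-3) node[of k] node[of "k + 1"] that
      by (simp add: mesh_interval_eq distrib_right)
  qed
  have u_cell: "((\<lambda>t. (deriv u t)\<^sup>2) has_integral (d k)\<^sup>2 * \<tau>) (mesh_interval \<tau> k)"
    if "a \<le> k" "k < b" for k
    using has_integral_deriv_affine_squared[where L="real_of_int k * \<tau>" and R="real_of_int k * \<tau> + \<tau>"]
      u[OF that] assms(3)
    by (simp add: mesh_interval_eq)
  have "\<tau> \<ge> 0" "a \<le> b" using assms(3,4) by auto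
  from has_integral_mesh_sum[OF this v_cell] has_integral_mesh_sum[OF this u_cell]
  show ?thesis by (simp add: integral_unique sum_distrib_left)
qed

end
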